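(* Let $n\ge 3$ and let $\Delta^o(D_{2n})$ be the order super commuting graph of the dihedral group $D_{2n}$. (i) If $n$ is odd, the Sombor spectrum of $\Delta^o(D_{2n})$ consists of $-(n-1)\sqrt2$ with multiplicity $n-2$, $-n\sqrt2$ with multiplicity $n-1$, and the three roots (with multiplicity) of \[x\big(x-(n-1)(n-2)\sqrt2\big)\big(x-n(n-1)\sqrt2\big)-(n-1)(5n^2-6n+2)\big(x-n(n-1)\sqrt2\big)-n(5n^2-4n+1)\big(x-(n-1)(n-2)\sqrt2\big).\] (ii) If $n$ is even, the Sombor spectrum of $\Delta^o(D_{2n})$ consists of $-(2n-1)\sqrt2$ with multiplicity $2n-1$ and $(2n-1)^2\sqrt2$ with multiplicity $1$.
   Context: For a finite simple graph $\Gamma$ with vertices $u_1,\dots,u_N$, the Sombor matrix $S(\Gamma)$ has $(i,j)$ entry $\sqrt{\deg(u_i)^2+\deg(u_j)^2}$ if $u_i,u_j$ are adjacent and $0$ otherwise; the Sombor spectrum is the multiset of its eigenvalues. $D_{2n}=\langle a,b: a^n=b^2=e,\ ba=a^{-1}b\rangle$. The commuting graph $\Delta(G)$ has vertex set $G$, distinct $x,y$ adjacent iff $xy=yx$. The order super commuting graph $\Delta^o(G)$ has vertex set $G$, and distinct $g,h$ are adjacent iff $o(g)=o(h)$ or there exist $g',h'\in G$ with $o(g')=o(g)$, $o(h')=o(h)$ and $g'h'=h'g'$ (with $g'\neq h'$); here $o(x)$ is the order of $x$. *)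

theory Defs
  imports "HOL-Algebra.Multiplicative_Group" "Jordan_Normal_Form.Char_Poly"
begin

text \<open>Dihedral group D_{2n} = <a,b | a^n = b^2 = e, ba = a^{-1}b>, modelled concretely:
  the pair (k, s) with k < n stands for a^k b^s (s = True meaning b^1).
  (a^i b^s)(a^j b^t) = a^(i + (-1)^s j) b^(s+t).\<close>

definition dihedral_group :: "nat \<Rightarrow> (nat \<times> bool) monoid" where
  "dihedral_group n =
     \<lparr> carrier = {(k, s). k < n},
       monoid.mult = (\<lambda>(i, s) (j, t). ((if s then i + n - j else i + j) mod n, s \<noteq> t)),
       one = (0, False) \<rparr>"

definition osc_adj :: "('a, 'b) monoid_scheme \<Rightarrow> 'a \<Rightarrow> 'a \<Rightarrow> bool" where
  "osc_adj G g h \<longleftrightarrow> g \<in> carrier G \<and> h \<in> carrier G \<and> g \<noteq> h \<and>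
     (group.ord G g = group.ord G h \<or>
      (\<exists>g'\<in>carrier G. \<exists>h'\<in>carrier G. group.ord G g' = group.ord G g \<and>
          group.ord G h' = group.ord G h \<and> g' \<otimes>\<^bsub>G\<^esub> h' = h' \<otimes>\<^bsub>G\<^esub> g' \<and> g' \<noteq> h'))"

definition graph_deg :: "'a set \<Rightarrow> ('a \<Rightarrow> 'a \<Rightarrow> bool) \<Rightarrow> 'a \<Rightarrow> nat" where
  "graph_deg V E v = card {u \<in> V. E v u}"

definition sombor_matrix :: "'a set \<Rightarrow> ('a \<Rightarrow> 'a \<Rightarrow> bool) \<Rightarrow> 'a list \<Rightarrow> complex mat" where
  "sombor_matrix V E vs = mat (length vs) (length vs)
     (\<lambda>(i, j). if E (vs ! i) (vs ! j)
               then complex_of_real (sqrt (real (graph_deg V E (vs ! i)) ^ 2 + real (graph_deg V E (vs ! j)) ^ 2))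
               else 0)"

definition sombor_spectrum :: "'a set \<Rightarrow> ('a \<Rightarrow> 'a \<Rightarrow> bool) \<Rightarrow> 'a list \<Rightarrow> complex multiset" where
  "sombor_spectrum V E vs = proots (char_poly (sombor_matrix V E vs))"

end

theory Submission
  imports Defs
begin

(* For odd n the elements of order 2 of D_2n are exactly the reflections, and a nontrivial
   rotation commutes with no reflection; hence in the order super commuting graph the identity
   is joined to everything, and two other elements are joined iff both are rotations or both
   are reflections.  For even n the half turn has order 2 and commutes with all rotations, so
   the graph is complete.  In both cases the Sombor matrix vanishes on the diagonal and its
   off-diagonal entries depend only on the classes of the two vertices.  Subtracting from the
   column of every vertex the column of its class representative (a unipotent change of basis)
   makes such a matrix block lower triangular: a class of size m contributes the eigenvalue
   -w(c,c) with multiplicity m - 1, and the remaining eigenvalues are those of the quotient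
   matrix ((m_i - [i = j]) w(i,j)). *)

section \<open>The dihedral group\<close>

lemma (in group) ord_eq_2_iff:
  assumes x: "x \<in> carrier G"
  shows "ord x = 2 \<longleftrightarrow> x \<noteq> \<one> \<and> x \<otimes> x = \<one>"
proof -
  have sq: "x [^] (2::nat) = x \<otimes> x" using x by (simp add: numeral_2_eq_2)
  show ?thesis
  proof
    assume "ord x = 2"
    then show "x \<noteq> \<one> \<and> x \<otimes> x = \<one>" using sq pow_ord_eq_1[OF x] ord_eq_1[OF x] by auto
  next
    assume "x \<noteq> \<one> \<and> x \<otimes> x = \<one>"
    then have "ord x dvd 2" "ord x \<noteq> 1" using sq pow_eq_id[OF x, of 2] ord_eq_1[OF x] by auto
    moreover have "ord x \<le> 2" using \<open>ord x dvd 2\<close> by (rule dvd_imp_le) simp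
    moreover have "ord x \<noteq> 0" using \<open>ord x dvd 2\<close> by (intro notI) simp
    ultimately show "ord x = 2" by linarith
  qed
qed

lemma carrier_dihedral_group [simp]: "carrier (dihedral_group n) = {..<n} \<times> UNIV"
  by (auto simp: dihedral_group_def)

lemma one_dihedral_group [simp]: "\<one>\<^bsub>dihedral_group n\<^esub> = (0, False)"
  by (simp add: dihedral_group_def)

lemma mult_dihedral_group [simp]:
  "(i, s) \<otimes>\<^bsub>dihedral_group n\<^esub> (j, t) = ((if s then i + n - j else i + j) mod n, s \<noteq> t)"
  by (simp add: dihedral_group_def)

lemma card_carrier_dihedral_group: "card (carrier (dihedral_group n)) = 2 * n"
  by (simp add: card_cartesian_product)

lemma dihedral_rotation_part_assoc:
  fixes n :: nat
  assumes "0 < n" "j < n" "k < n"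
  defines "f \<equiv> \<lambda>i s j. (if s then i + n - j else i + j) mod n"
  shows "f (f i s j) (s \<noteq> t) k = f i s (f j t k)"
proof -
  have int_f: "int (f a b c) = (int a + (if b then - 1 else 1) * int c) mod int n"
    if "c < n" for a b c
    using that by (auto simp: f_def of_nat_mod simp flip: diff_add_eq)
  have f_lt: "f a b c < n" for a b c
    using assms(1) by (simp add: f_def)
  have "int (f (f i s j) (s \<noteq> t) k) = int (f i s (f j t k))"
    unfolding int_f[OF assms(3)] int_f[OF f_lt] int_f[OF assms(2)]
    by (cases s; cases t) (simp_all add: mod_simps algebra_simps)
  then show ?thesis by simp
qed

lemma group_dihedral_group:
  assumes "0 < n"
  shows "group (dihedral_group n)"
proof (rule groupI)
  fix x y z
  assume "x \<in> carrier (dihedral_group n)" "y \<in> carrier (dihedral_group n)"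
    "z \<in> carrier (dihedral_group n)"
  then obtain i s j t k u where xyz: "x = (i, s)" "y = (j, t)" "z = (k, u)" and "j < n" "k < n"
    by auto
  then show "x \<otimes>\<^bsub>dihedral_group n\<^esub> y \<otimes>\<^bsub>dihedral_group n\<^esub> z =
      x \<otimes>\<^bsub>dihedral_group n\<^esub> (y \<otimes>\<^bsub>dihedral_group n\<^esub> z)"
    using dihedral_rotation_part_assoc[OF assms \<open>j < n\<close> \<open>k < n\<close>, where i = i and s = s and t = t]
    by auto
next
  fix x assume "x \<in> carrier (dihedral_group n)"
  then obtain i s where x: "x = (i, s)" "i < n" by auto
  show "\<exists>y\<in>carrier (dihedral_group n). y \<otimes>\<^bsub>dihedral_group n\<^esub> x = \<one>\<^bsub>dihedral_group n\<^esub>"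
  proof (cases s)
    case True
    then show ?thesis using x by (intro bexI[of _ x]) auto
  next
    case False
    then show ?thesis using x assms
      by (intro bexI[of _ "((n - i) mod n, False)"]) (auto simp: mod_add_left_eq)
  qed
qed (use assms in auto)

lemma ord_dihedral_reflection:
  assumes "i < n"
  shows "group.ord (dihedral_group n) (i, True) = 2"
proof -
  interpret group "dihedral_group n" using assms by (intro group_dihedral_group) simp
  show ?thesis using assms by (subst ord_eq_2_iff) auto
qed

lemma ord_dihedral_rotation_eq_2_iff:
  assumes "i < n"
  shows "group.ord (dihedral_group n) (i, False) = 2 \<longleftrightarrow> 2 * i = n"
proof -
  interpret group "dihedral_group n" using assms by (intro group_dihedral_group) simp
  have "(i + i) mod n = 0 \<longleftrightarrow> i = 0 \<or> 2 * i = n"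
    using assms by (cases "i + i < n") (auto simp: le_mod_geq)
  then show ?thesis using assms by (subst ord_eq_2_iff) auto
qed

lemma dihedral_rotation_reflection_commute_iff:
  assumes "i < n" "j < n"
  shows "(i, False) \<otimes>\<^bsub>dihedral_group n\<^esub> (j, True) = (j, True) \<otimes>\<^bsub>dihedral_group n\<^esub> (i, False)
    \<longleftrightarrow> i = 0 \<or> 2 * i = n"
proof -
  interpret group "dihedral_group n" using assms by (intro group_dihedral_group) simp
  have "(j, True) \<otimes>\<^bsub>dihedral_group n\<^esub> (i, False) =
      ((n - i) mod n, False) \<otimes>\<^bsub>dihedral_group n\<^esub> (j, True)"
    using assms by (simp add: mod_add_left_eq add.commute)
      (metis add_diff_assoc less_imp_le mod_add_right_eq)
  then have "(i, False) \<otimes>\<^bsub>dihedral_group n\<^esub> (j, True) = (j, True) \<otimes>\<^bsub>dihedral_group n\<^esub> (i, False)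
      \<longleftrightarrow> (i, False) = ((n - i) mod n, False)"
    using assms right_cancel[of "(j, True)" "(i, False)" "((n - i) mod n, False)"]
    by (simp del: mult_dihedral_group)
  also have "\<dots> \<longleftrightarrow> i = 0 \<or> 2 * i = n"
    using assms by (cases "i = 0") auto
  finally show ?thesis .
qed

section \<open>The order super commuting graph of the dihedral group\<close>

lemma osc_adjI_same_ord:
  assumes "g \<in> carrier G" "h \<in> carrier G" "g \<noteq> h" "group.ord G g = group.ord G h"
  shows "osc_adj G g h"
  using assms by (simp add: osc_adj_def)

lemma osc_adjI_commuting_witnesses:
  assumes "g \<in> carrier G" "h \<in> carrier G" "g \<noteq> h"
    and "g' \<in> carrier G" "h' \<in> carrier G" "g' \<noteq> h'"
    and "group.ord G g' = group.ord G g" "group.ord G h' = group.ord G h"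
    and "g' \<otimes>\<^bsub>G\<^esub> h' = h' \<otimes>\<^bsub>G\<^esub> g'"
  shows "osc_adj G g h"
  unfolding osc_adj_def using assms by blast

definition dihedral_class :: "nat \<times> bool \<Rightarrow> nat" where
  "dihedral_class x = (if x = (0, False) then 0 else if snd x then 2 else 1)"

definition dihedral_odd_class_adj :: "nat \<Rightarrow> nat \<Rightarrow> bool" where
  "dihedral_odd_class_adj p q \<longleftrightarrow> p = 0 \<or> q = 0 \<or> p = q"

lemma dihedral_class_odd_by_ord:
  assumes "odd n" "x \<in> carrier (dihedral_group n)"
  shows "dihedral_class x =
    (if group.ord (dihedral_group n) x = 1 then 0
     else if group.ord (dihedral_group n) x = 2 then 2 else 1)"
proof -
  interpret group "dihedral_group n" using assms by (intro group_dihedral_group) (simp add: odd_pos)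
  obtain i s where x: "x = (i, s)" "i < n" using assms(2) by auto
  have "2 * i \<noteq> n" using assms(1) by auto
  then show ?thesis
    using assms(2) x ord_eq_1[OF assms(2)] ord_dihedral_reflection ord_dihedral_rotation_eq_2_iff
    by (cases s) (auto simp: dihedral_class_def)
qed

lemma dihedral_odd_rotation_reflection_not_commute:
  assumes "odd n" "x \<in> carrier (dihedral_group n)" "y \<in> carrier (dihedral_group n)"
    and "dihedral_class x = 1" "dihedral_class y = 2"
  shows "x \<otimes>\<^bsub>dihedral_group n\<^esub> y \<noteq> y \<otimes>\<^bsub>dihedral_group n\<^esub> x"
proof -
  obtain i j where "x = (i, False)" "y = (j, True)" "i \<noteq> 0" "i < n" "j < n"
    using assms(2-5) by (auto simp: dihedral_class_def split: if_splits)
  moreover have "2 * i \<noteq> n" using assms(1) by auto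
  ultimately show ?thesis using dihedral_rotation_reflection_commute_iff by simp
qed

lemma dihedral_commute_identity_or_rotations:
  assumes "x \<in> carrier (dihedral_group n)" "y \<in> carrier (dihedral_group n)"
    and "dihedral_class x = 0 \<or> dihedral_class y = 0 \<or> \<not> snd x \<and> \<not> snd y"
  shows "x \<otimes>\<^bsub>dihedral_group n\<^esub> y = y \<otimes>\<^bsub>dihedral_group n\<^esub> x"
  using assms by (auto simp: dihedral_class_def add.commute split: if_splits)

lemma osc_adj_dihedral_odd:
  assumes n: "odd n"
    and g: "g \<in> carrier (dihedral_group n)" and h: "h \<in> carrier (dihedral_group n)"
  shows "osc_adj (dihedral_group n) g h \<longleftrightarrow>
    g \<noteq> h \<and> dihedral_odd_class_adj (dihedral_class g) (dihedral_class h)"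
proof
  let ?ord = "group.ord (dihedral_group n)"
  have class_eq: "dihedral_class x = dihedral_class y"
    if "x \<in> carrier (dihedral_group n)" "y \<in> carrier (dihedral_group n)" "?ord x = ?ord y" for x y
    using that dihedral_class_odd_by_ord[OF n] by metis
  assume adj: "osc_adj (dihedral_group n) g h"
  then have "g \<noteq> h" by (simp add: osc_adj_def)
  moreover have "dihedral_odd_class_adj (dihedral_class g) (dihedral_class h)"
  proof (rule ccontr)
    assume "\<not> ?thesis"
    then have classes: "{dihedral_class g, dihedral_class h} = {1, 2}"
      by (auto simp: dihedral_odd_class_adj_def dihedral_class_def split: if_splits)
    then have "?ord g \<noteq> ?ord h" using class_eq[OF g h] by auto
    then obtain g' h' where g': "g' \<in> carrier (dihedral_group n)" "?ord g' = ?ord g"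
      and h': "h' \<in> carrier (dihedral_group n)" "?ord h' = ?ord h"
      and comm: "g' \<otimes>\<^bsub>dihedral_group n\<^esub> h' = h' \<otimes>\<^bsub>dihedral_group n\<^esub> g'"
      using adj unfolding osc_adj_def by blast
    have "{dihedral_class g', dihedral_class h'} = {1, 2}"
      using classes class_eq[OF g'(1) g g'(2)] class_eq[OF h'(1) h h'(2)] by simp
    then show False
      using comm dihedral_odd_rotation_reflection_not_commute[OF n g'(1) h'(1)]
        dihedral_odd_rotation_reflection_not_commute[OF n h'(1) g'(1)]
      by (auto simp: doubleton_eq_iff)
  qed
  ultimately show "g \<noteq> h \<and> dihedral_odd_class_adj (dihedral_class g) (dihedral_class h)" ..
next
  assume classes: "g \<noteq> h \<and> dihedral_odd_class_adj (dihedral_class g) (dihedral_class h)"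
  show "osc_adj (dihedral_group n) g h"
  proof (cases "snd g \<and> snd h")
    case True
    then show ?thesis
      using g h classes ord_dihedral_reflection by (intro osc_adjI_same_ord) auto
  next
    case False
    then have "g \<otimes>\<^bsub>dihedral_group n\<^esub> h = h \<otimes>\<^bsub>dihedral_group n\<^esub> g"
      using classes g h by (intro dihedral_commute_identity_or_rotations)
        (auto simp: dihedral_odd_class_adj_def dihedral_class_def split: if_splits)
    then show ?thesis
      using g h classes by (intro osc_adjI_commuting_witnesses[where g' = g and h' = h]) auto
  qed
qed

lemma osc_adj_dihedral_even:
  assumes n: "even n"
    and g: "g \<in> carrier (dihedral_group n)" and h: "h \<in> carrier (dihedral_group n)"
  shows "osc_adj (dihedral_group n) g h \<longleftrightarrow> g \<noteq> h"
proof
  assume "osc_adj (dihedral_group n) g h"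
  then show "g \<noteq> h" by (simp add: osc_adj_def)
next
  assume ne: "g \<noteq> h"
  have half_turn: "group.ord (dihedral_group n) (n div 2, False) = 2"
    using g n by (subst ord_dihedral_rotation_eq_2_iff) auto
  define \<rho> where "\<rho> x = (if snd x then (n div 2, False) else x)" for x :: "nat \<times> bool"
  have \<rho>: "\<rho> x \<in> carrier (dihedral_group n) \<and> \<not> snd (\<rho> x) \<and>
      group.ord (dihedral_group n) (\<rho> x) = group.ord (dihedral_group n) x"
    if "x \<in> carrier (dihedral_group n)" for x
    using that half_turn ord_dihedral_reflection by (auto simp: \<rho>_def)
  show "osc_adj (dihedral_group n) g h"
  proof (cases "group.ord (dihedral_group n) g = group.ord (dihedral_group n) h")
    case False
    then have "\<rho> g \<noteq> \<rho> h" using \<rho>[OF g] \<rho>[OF h] by metis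
    moreover have "\<rho> g \<otimes>\<^bsub>dihedral_group n\<^esub> \<rho> h = \<rho> h \<otimes>\<^bsub>dihedral_group n\<^esub> \<rho> g"
      using \<rho>[OF g] \<rho>[OF h] by (intro dihedral_commute_identity_or_rotations) auto
    ultimately show ?thesis
      using g h ne \<rho>[OF g] \<rho>[OF h]
      by (intro osc_adjI_commuting_witnesses[where g' = "\<rho> g" and h' = "\<rho> h"]) auto
  qed (use g h ne in \<open>rule osc_adjI_same_ord\<close>)
qed

lemma card_dihedral_class:
  assumes "0 < n"
  shows "card {x \<in> carrier (dihedral_group n). dihedral_class x = p} =
    (if p = 0 then 1 else if p = 1 then n - 1 else if p = 2 then n else 0)"
proof -
  have "{x \<in> carrier (dihedral_group n). dihedral_class x = p} =
      (if p = 0 then {(0, False)} else if p = 1 then {..<n} \<times> {False} - {(0, False)}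
       else if p = 2 then {..<n} \<times> {True} else {})"
    using assms by (auto simp: dihedral_class_def split: if_splits)
  then show ?thesis using assms by (simp add: card_cartesian_product)
qed

lemma graph_deg_dihedral_odd:
  assumes n: "odd n" and x: "x \<in> carrier (dihedral_group n)"
  shows "graph_deg (carrier (dihedral_group n)) (osc_adj (dihedral_group n)) x =
    (if dihedral_class x = 0 then 2 * n - 1 else if dihedral_class x = 1 then n - 1 else n)"
proof -
  let ?V = "carrier (dihedral_group n)"
  have nbrs: "{u \<in> ?V. osc_adj (dihedral_group n) x u} =
      {u \<in> ?V. u \<noteq> x \<and> (dihedral_class x = 0 \<or> dihedral_class u = 0 \<or>
        dihedral_class x = dihedral_class u)}"
    using osc_adj_dihedral_odd[OF n x] by (auto simp: dihedral_odd_class_adj_def)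
  have "dihedral_class x \<in> {0, 1, 2}" by (simp add: dihedral_class_def)
  then consider "dihedral_class x = 0" | "dihedral_class x = 1" | "dihedral_class x = 2"
    by auto
  then show ?thesis
  proof cases
    case 1
    then have "{u \<in> ?V. osc_adj (dihedral_group n) x u} = ?V - {x}"
      unfolding nbrs by auto
    then show ?thesis
      using 1 x by (simp add: graph_deg_def card_carrier_dihedral_group)
  next
    case 2
    then have "{u \<in> ?V. osc_adj (dihedral_group n) x u} = {..<n} \<times> {False} - {x}"
      unfolding nbrs using x by (auto simp: dihedral_class_def split: if_splits)
    moreover have "x \<in> {..<n} \<times> {False}"
      using 2 x by (cases x) (auto simp: dihedral_class_def split: if_splits)
    ultimately show ?thesis
      using 2 by (simp add: graph_deg_def card_cartesian_product)
  next
    case 3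
    then have "{u \<in> ?V. osc_adj (dihedral_group n) x u} = insert (0, False) ({..<n} \<times> {True} - {x})"
      unfolding nbrs using x by (auto simp: dihedral_class_def split: if_splits)
    moreover have "x \<in> {..<n} \<times> {True}"
      using 3 x by (cases x) (auto simp: dihedral_class_def split: if_splits)
    ultimately show ?thesis
      using 3 odd_pos[OF n] by (simp add: graph_deg_def card_cartesian_product)
  qed
qed

lemma graph_deg_dihedral_even:
  assumes n: "even n" and x: "x \<in> carrier (dihedral_group n)"
  shows "graph_deg (carrier (dihedral_group n)) (osc_adj (dihedral_group n)) x = 2 * n - 1"
proof -
  have "{u \<in> carrier (dihedral_group n). osc_adj (dihedral_group n) x u} =
      carrier (dihedral_group n) - {x}"
    using osc_adj_dihedral_even[OF n x] by auto
  then show ?thesis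
    using x by (simp add: graph_deg_def card_carrier_dihedral_group)
qed

section \<open>Matrices whose entries depend only on classes\<close>

lemma char_poly_four_block_mat_upper_right_zero:
  fixes A :: "'a :: idom mat"
  assumes "A \<in> carrier_mat n n" "C \<in> carrier_mat m n" "D \<in> carrier_mat m m"
  shows "char_poly (four_block_mat A (0\<^sub>m n m) C D) = char_poly A * char_poly D"
proof -
  have "char_poly_matrix (four_block_mat A (0\<^sub>m n m) C D) =
      four_block_mat (char_poly_matrix A) (0\<^sub>m n m) (map_mat (\<lambda>a. [:- a:]) C) (char_poly_matrix D)"
    using assms by (intro eq_matI) (auto simp: char_poly_matrix_def one_poly_def)
  then show ?thesis
    unfolding char_poly_def using assms
    by (simp add: det_four_block_mat_upper_right_zero[of _ n _ m])
qed

lemma similar_mat_by_square_zero: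
  fixes S T X :: "'a :: comm_ring_1 mat"
  assumes carr: "S \<in> carrier_mat N N" "T \<in> carrier_mat N N" "X \<in> carrier_mat N N"
    and sq: "X * X = 0\<^sub>m N N"
    and intertwine: "S * (1\<^sub>m N - X) = (1\<^sub>m N - X) * T"
  shows "similar_mat S T"
proof (rule similar_matI)
  let ?P = "1\<^sub>m N - X" and ?Q = "1\<^sub>m N + X"
  have "?P * ?Q = ?P * 1\<^sub>m N + ?P * X"
    by (rule mult_add_distrib_mat) (use carr in auto)
  also have "?P * X = X - X * X"
    by (subst minus_mult_distrib_mat[of _ N N]) (use carr in auto)
  also have "?P * 1\<^sub>m N + (X - X * X) = 1\<^sub>m N" unfolding sq using carr by (intro eq_matI) auto
  finally show PQ: "?P * ?Q = 1\<^sub>m N" .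
  have "?Q * ?P = ?Q * 1\<^sub>m N - ?Q * X"
    by (rule mult_minus_distrib_mat) (use carr in auto)
  also have "?Q * X = X + X * X"
    by (subst add_mult_distrib_mat[of _ N N]) (use carr in auto)
  also have "?Q * 1\<^sub>m N - (X + X * X) = 1\<^sub>m N" unfolding sq using carr by (intro eq_matI) auto
  finally show "?Q * ?P = 1\<^sub>m N" .
  have "S = S * (?P * ?Q)" using carr PQ by simp
  also have "\<dots> = S * ?P * ?Q" using carr by (intro assoc_mult_mat[symmetric]) auto
  also have "\<dots> = ?P * T * ?Q" unfolding intertwine ..
  finally show "S = ?P * T * ?Q" .
qed (use carr in auto)

definition class_mat :: "nat \<Rightarrow> (nat \<Rightarrow> nat) \<Rightarrow> (nat \<Rightarrow> nat \<Rightarrow> 'a) \<Rightarrow> 'a :: zero mat" where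
  "class_mat N c w = mat N N (\<lambda>(i, j). if i = j then 0 else w (c i) (c j))"

definition class_size :: "nat \<Rightarrow> (nat \<Rightarrow> nat) \<Rightarrow> nat \<Rightarrow> nat" where
  "class_size N c i = card {l. l < N \<and> c l = i}"

definition class_quotient_mat ::
    "nat \<Rightarrow> nat \<Rightarrow> (nat \<Rightarrow> nat) \<Rightarrow> (nat \<Rightarrow> nat \<Rightarrow> 'a) \<Rightarrow> 'a :: comm_ring_1 mat" where
  "class_quotient_mat N k c w =
     mat k k (\<lambda>(i, j). (of_nat (class_size N c i) - (if i = j then 1 else 0)) * w i j)"

text \<open>Right multiplication by \<open>1 - class_shear_mat N k c\<close> subtracts from every column
  \<open>j \<ge> k\<close> the column of its class representative \<open>c j\<close>.\<close>

definition class_shear_mat :: "nat \<Rightarrow> nat \<Rightarrow> (nat \<Rightarrow> nat) \<Rightarrow> 'a :: zero_neq_one mat" where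
  "class_shear_mat N k c = mat N N (\<lambda>(i, j). if k \<le> j \<and> i = c j then 1 else 0)"

definition class_block_mat ::
    "nat \<Rightarrow> nat \<Rightarrow> (nat \<Rightarrow> nat) \<Rightarrow> (nat \<Rightarrow> nat \<Rightarrow> 'a) \<Rightarrow> 'a :: comm_ring_1 mat" where
  "class_block_mat N k c w = four_block_mat (class_quotient_mat N k c w) (0\<^sub>m k (N - k))
     (mat (N - k) k (\<lambda>(i, j). w (c (k + i)) j))
     (mat (N - k) (N - k) (\<lambda>(i, j). if i = j then - w (c (k + i)) (c (k + i)) else 0))"

context
  fixes N k :: nat and c :: "nat \<Rightarrow> nat"
  assumes k_le: "k \<le> N" and rep: "\<And>i. i < k \<Longrightarrow> c i = i" and cls: "\<And>l. l < N \<Longrightarrow> c l < k"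
begin

lemma class_size_eq_Suc_card_tail:
  assumes "i < k"
  shows "class_size N c i = Suc (card {l \<in> {k..<N}. c l = i})"
proof -
  have "{l. l < N \<and> c l = i} = insert i {l \<in> {k..<N}. c l = i}"
    using assms k_le rep by (auto, metis leI)
  moreover have "i \<notin> {l \<in> {k..<N}. c l = i}" using assms by simp
  moreover have "finite {l \<in> {k..<N}. c l = i}" by simp
  ultimately show ?thesis unfolding class_size_def by simp
qed

lemma prod_tail_eq_prod_class_size:
  "(\<Prod>l\<in>{k..<N}. f (c l)) = (\<Prod>i<k. f i ^ (class_size N c i - 1))"
proof -
  have "(\<Prod>l\<in>{k..<N}. f (c l)) = (\<Prod>i<k. \<Prod>l\<in>{l \<in> {k..<N}. c l = i}. f (c l))"
    by (rule prod.group[symmetric]) (use cls in auto)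
  also have "\<dots> = (\<Prod>i<k. f i ^ (class_size N c i - 1))"
    by (rule prod.cong) (simp_all add: class_size_eq_Suc_card_tail)
  finally show ?thesis .
qed

lemma class_shear_mat_carrier: "class_shear_mat N k c \<in> carrier_mat N N"
  by (simp add: class_shear_mat_def)

lemma class_block_mat_carrier: "class_block_mat N k c w \<in> carrier_mat N N"
proof -
  have "class_block_mat N k c w \<in> carrier_mat (k + (N - k)) (k + (N - k))"
    unfolding class_block_mat_def
    by (rule four_block_carrier_mat) (auto simp: class_quotient_mat_def)
  then show ?thesis using k_le by simp
qed

lemma index_mult_class_shear_mat:
  fixes A :: "'a :: comm_ring_1 mat"
  assumes "A \<in> carrier_mat N N" "i < N" "j < N"
  shows "(A * class_shear_mat N k c) $$ (i, j) = (if k \<le> j then A $$ (i, c j) else 0)"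
proof -
  have "(A * class_shear_mat N k c) $$ (i, j) =
      (\<Sum>l<N. A $$ (i, l) * class_shear_mat N k c $$ (l, j))"
    using assms class_shear_mat_carrier[where 'a = 'a]
    by (auto simp: scalar_prod_def atLeast0LessThan intro!: sum.cong)
  also have "\<dots> = (\<Sum>l<N. if l = c j then (if k \<le> j then A $$ (i, l) else 0) else 0)"
    using assms by (intro sum.cong) (auto simp: class_shear_mat_def)
  also have "\<dots> = (if k \<le> j then A $$ (i, c j) else 0)"
    using cls[OF \<open>j < N\<close>] k_le by (subst sum.delta) auto
  finally show ?thesis .
qed

lemma index_class_shear_mat_mult:
  fixes A :: "'a :: comm_ring_1 mat"
  assumes "A \<in> carrier_mat N N" "i < N" "j < N"
  shows "(class_shear_mat N k c * A) $$ (i, j) = (\<Sum>l | k \<le> l \<and> l < N \<and> c l = i. A $$ (l, j))"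
proof -
  have "(class_shear_mat N k c * A) $$ (i, j) =
      (\<Sum>l<N. class_shear_mat N k c $$ (i, l) * A $$ (l, j))"
    using assms class_shear_mat_carrier[where 'a = 'a]
    by (auto simp: scalar_prod_def atLeast0LessThan intro!: sum.cong)
  also have "\<dots> = (\<Sum>l<N. if l \<in> {l. k \<le> l \<and> l < N \<and> c l = i} then A $$ (l, j) else 0)"
    using assms by (intro sum.cong) (auto simp: class_shear_mat_def)
  also have "\<dots> = (\<Sum>l | k \<le> l \<and> l < N \<and> c l = i. A $$ (l, j))"
    by (subst sum.inter_restrict[symmetric]) (auto intro: sum.cong)
  finally show ?thesis .
qed

lemma class_shear_mat_square:
  "class_shear_mat N k c * class_shear_mat N k c = (0\<^sub>m N N :: 'a :: comm_ring_1 mat)"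
proof (rule eq_matI)
  fix i j assume "i < dim_row (0\<^sub>m N N :: 'a mat)" "j < dim_col (0\<^sub>m N N :: 'a mat)"
  then have i: "i < N" and j: "j < N" by auto
  show "(class_shear_mat N k c * class_shear_mat N k c) $$ (i, j) = (0\<^sub>m N N :: 'a mat) $$ (i, j)"
    unfolding index_mult_class_shear_mat[OF class_shear_mat_carrier i j]
    using i j cls[OF j] by (simp add: class_shear_mat_def)
qed (use class_shear_mat_carrier in auto)

lemma index_class_block_mat:
  assumes "i < N" "j < N"
  shows "class_block_mat N k c w $$ (i, j) =
    (if j < k then (if i < k then (of_nat (class_size N c i) - (if i = j then 1 else 0)) * w i j
                    else w (c i) j)
     else if i = j then - w (c j) (c j) else 0)"
  using assms k_le by (auto simp: class_block_mat_def class_quotient_mat_def)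

lemma index_class_shear_mat_mult_class_block_mat:
  fixes w :: "nat \<Rightarrow> nat \<Rightarrow> 'a :: comm_ring_1"
  assumes i: "i < N" and j: "j < N"
  shows "(class_shear_mat N k c * class_block_mat N k c w) $$ (i, j) =
    (if j < k then (if i < k then of_nat (class_size N c i) - 1 else 0) * w i j
     else if c j = i then - w i i else 0)"
proof -
  let ?I = "{l. k \<le> l \<and> l < N \<and> c l = i}"
  have size_I: "of_nat (class_size N c i) = 1 + (of_nat (card ?I) :: 'a)" if "i < k"
    using that by (simp add: class_size_eq_Suc_card_tail)
  have empty_I: "card ?I = 0" if "\<not> i < k"
  proof -
    have "?I = {}" using that cls by force
    then show ?thesis by (simp only: card.empty)
  qed
  show ?thesis
    unfolding index_class_shear_mat_mult[OF class_block_mat_carrier i j]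
  proof (cases "j < k")
    case True
    then have "(\<Sum>l\<in>?I. class_block_mat N k c w $$ (l, j)) = (\<Sum>l\<in>?I. w i j)"
      using j by (intro sum.cong) (auto simp: index_class_block_mat)
    then show "(\<Sum>l\<in>?I. class_block_mat N k c w $$ (l, j)) =
        (if j < k then (if i < k then of_nat (class_size N c i) - 1 else 0) * w i j
         else if c j = i then - w i i else 0)"
      using True by (cases "i < k") (simp_all add: size_I empty_I)
  next
    case False
    then have "(\<Sum>l\<in>?I. class_block_mat N k c w $$ (l, j)) = (\<Sum>l\<in>?I. if l = j then - w i i else 0)"
      using j by (intro sum.cong) (auto simp: index_class_block_mat)
    then show "(\<Sum>l\<in>?I. class_block_mat N k c w $$ (l, j)) =
        (if j < k then (if i < k then of_nat (class_size N c i) - 1 else 0) * w i j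
         else if c j = i then - w i i else 0)"
      using False j by simp
  qed
qed

lemma class_mat_shear_intertwine:
  fixes w :: "nat \<Rightarrow> nat \<Rightarrow> 'a :: comm_ring_1"
  defines "X \<equiv> class_shear_mat N k c :: 'a mat" and "T \<equiv> class_block_mat N k c w"
  shows "class_mat N c w * (1\<^sub>m N - X) = (1\<^sub>m N - X) * T"
proof -
  let ?S = "class_mat N c w"
  have carr: "?S \<in> carrier_mat N N" "X \<in> carrier_mat N N" "T \<in> carrier_mat N N"
    unfolding X_def T_def using class_shear_mat_carrier class_block_mat_carrier
    by (auto simp: class_mat_def)
  have "?S * (1\<^sub>m N - X) = ?S - ?S * X"
    by (subst mult_minus_distrib_mat[of _ N N]) (use carr in auto)
  also have "\<dots> = T - X * T"
  proof (rule eq_matI)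
    fix i j assume "i < dim_row (T - X * T)" "j < dim_col (T - X * T)"
    then have i: "i < N" and j: "j < N" using carr by auto
    have lhs: "(?S - ?S * X) $$ (i, j) = ?S $$ (i, j) - (if k \<le> j then ?S $$ (i, c j) else 0)"
      using carr i j unfolding X_def
      by (simp add: index_mult_class_shear_mat del: index_mult_mat(1))
    have rhs: "(T - X * T) $$ (i, j) = T $$ (i, j) - (X * T) $$ (i, j)"
      using carr i j by simp
    have S_ij: "?S $$ (i, j) = (if i = j then 0 else w (c i) (c j))"
      using i j by (simp add: class_mat_def)
    have S_icj: "?S $$ (i, c j) = (if i = c j then 0 else w (c i) (c j))"
      using i cls[OF j] k_le rep[OF cls[OF j]] by (simp add: class_mat_def)
    show "(?S - ?S * X) $$ (i, j) = (T - X * T) $$ (i, j)"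
      unfolding lhs rhs S_ij S_icj unfolding X_def T_def
        index_class_shear_mat_mult_class_block_mat[OF i j] index_class_block_mat[OF i j]
      using rep[of i] rep[of j] cls[OF j]
      by (cases "j < k"; cases "i < k") (auto simp: algebra_simps)
  qed (use carr in auto)
  also have "\<dots> = (1\<^sub>m N - X) * T"
    by (subst minus_mult_distrib_mat[of _ N N]) (use carr in auto)
  finally show ?thesis .
qed

lemma char_poly_class_block_mat:
  fixes w :: "nat \<Rightarrow> nat \<Rightarrow> 'a :: idom"
  shows "char_poly (class_block_mat N k c w) =
    char_poly (class_quotient_mat N k c w) * (\<Prod>l\<in>{k..<N}. [:w (c l) (c l), 1:])"
proof -
  define D :: "'a mat" where
    "D = mat (N - k) (N - k) (\<lambda>(i, j). if i = j then - w (c (k + i)) (c (k + i)) else 0)"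
  have "char_poly (class_block_mat N k c w) = char_poly (class_quotient_mat N k c w) * char_poly D"
    unfolding class_block_mat_def D_def
    by (rule char_poly_four_block_mat_upper_right_zero) (auto simp: class_quotient_mat_def)
  also have "char_poly D = (\<Prod>a\<leftarrow>diag_mat D. [:- a, 1:])"
    by (rule char_poly_upper_triangular[of _ "N - k"]) (auto simp: D_def upper_triangular_def)
  also have "\<dots> = (\<Prod>i\<leftarrow>[0..<N - k]. [:w (c (k + i)) (c (k + i)), 1:])"
    unfolding diag_mat_def D_def by (intro arg_cong[where f = prod_list]) auto
  also have "\<dots> = (\<Prod>l\<in>{k..<N}. [:w (c l) (c l), 1:])"
    by (simp add: prod.distinct_set_conv_list[symmetric] prod.atLeastLessThan_shift_0[of _ k N])
  finally show ?thesis .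
qed

lemma char_poly_class_mat:
  fixes w :: "nat \<Rightarrow> nat \<Rightarrow> 'a :: idom"
  shows "char_poly (class_mat N c w) =
    char_poly (class_quotient_mat N k c w) * (\<Prod>i<k. [:w i i, 1:] ^ (class_size N c i - 1))"
proof -
  have "similar_mat (class_mat N c w) (class_block_mat N k c w)"
    using class_shear_mat_carrier class_block_mat_carrier class_shear_mat_square
      class_mat_shear_intertwine
    by (intro similar_mat_by_square_zero[where X = "class_shear_mat N k c"])
      (auto simp: class_mat_def)
  then have "char_poly (class_mat N c w) = char_poly (class_block_mat N k c w)"
    by (rule char_poly_similar)
  also have "\<dots> = char_poly (class_quotient_mat N k c w) * (\<Prod>l\<in>{k..<N}. [:w (c l) (c l), 1:])"
    by (rule char_poly_class_block_mat)
  also have "(\<Prod>l\<in>{k..<N}. [:w (c l) (c l), 1:]) = (\<Prod>i<k. [:w i i, 1:] ^ (class_size N c i - 1))"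
    by (rule prod_tail_eq_prod_class_size)
  finally show ?thesis .
qed

end

lemma det_2:
  fixes A :: "'a :: comm_ring_1 mat"
  assumes A: "A \<in> carrier_mat 2 2"
  shows "det A = A $$ (0,0) * A $$ (1,1) - A $$ (0,1) * A $$ (1,0)"
proof -
  have "det A = (\<Sum>j<2. A $$ (0,j) * cofactor A 0 j)" by (rule laplace_expansion_row[OF A]) simp
  also have "\<dots> = A $$ (0,0) * cofactor A 0 0 + A $$ (0,1) * cofactor A 0 1"
    by (simp add: numeral_2_eq_2)
  also have "cofactor A 0 0 = A $$ (1,1)"
    unfolding cofactor_def using A by (simp add: det_single mat_delete_def)
  also have "cofactor A 0 1 = - A $$ (1,0)"
    unfolding cofactor_def using A by (simp add: det_single mat_delete_def)
  finally show ?thesis by (simp add: algebra_simps)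
qed

lemma det_3:
  fixes A :: "'a :: comm_ring_1 mat"
  assumes A: "A \<in> carrier_mat 3 3"
  shows "det A = A $$ (0,0) * (A $$ (1,1) * A $$ (2,2) - A $$ (1,2) * A $$ (2,1))
     - A $$ (0,1) * (A $$ (1,0) * A $$ (2,2) - A $$ (1,2) * A $$ (2,0))
     + A $$ (0,2) * (A $$ (1,0) * A $$ (2,1) - A $$ (1,1) * A $$ (2,0))"
proof -
  have "det A = (\<Sum>j<3. A $$ (0,j) * cofactor A 0 j)" by (rule laplace_expansion_row[OF A]) simp
  also have "\<dots> = A $$ (0,0) * cofactor A 0 0 + A $$ (0,1) * cofactor A 0 1
      + A $$ (0,2) * cofactor A 0 2"
  proof -
    have "{..<3::nat} = {0, 1, 2}" by auto
    then show ?thesis by (simp add: algebra_simps)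
  qed
  also have "cofactor A 0 0 = A $$ (1,1) * A $$ (2,2) - A $$ (1,2) * A $$ (2,1)"
    unfolding cofactor_def using A by (subst det_2) (auto simp: mat_delete_def numeral_2_eq_2)
  also have "cofactor A 0 1 = - (A $$ (1,0) * A $$ (2,2) - A $$ (1,2) * A $$ (2,0))"
    unfolding cofactor_def using A by (subst det_2) (auto simp: mat_delete_def numeral_2_eq_2)
  also have "cofactor A 0 2 = A $$ (1,0) * A $$ (2,1) - A $$ (1,1) * A $$ (2,0)"
    unfolding cofactor_def using A by (subst det_2) (auto simp: mat_delete_def numeral_2_eq_2)
  finally show ?thesis by (simp add: algebra_simps)
qed

lemma poly_char_poly_3:
  fixes A :: "'a :: field mat"
  assumes A: "A \<in> carrier_mat 3 3"
  shows "poly (char_poly A) x =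
      (x - A $$ (0,0)) * ((x - A $$ (1,1)) * (x - A $$ (2,2)) - A $$ (1,2) * A $$ (2,1))
    - A $$ (0,1) * (A $$ (1,0) * (x - A $$ (2,2)) + A $$ (1,2) * A $$ (2,0))
    - A $$ (0,2) * (A $$ (1,0) * A $$ (2,1) + (x - A $$ (1,1)) * A $$ (2,0))"
  unfolding char_poly_matrix[OF A] using A
  by (subst det_3) (auto simp: char_matrix_def algebra_simps)

lemma det_permute_rows_cols:
  fixes A :: "'a :: comm_ring_1 mat"
  assumes A: "A \<in> carrier_mat n n" and p: "p permutes {..<n}"
  shows "det (mat n n (\<lambda>(i, j). A $$ (p i, p j))) = det A"
proof -
  have p': "p permutes {0..<n}" using p by (simp add: atLeast0LessThan)
  have pn: "p i < n" if "i < n" for i using permutes_in_image[OF p] that by simp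
  let ?C = "mat n n (\<lambda>(i, j). A $$ (i, p j))"
  have C: "?C \<in> carrier_mat n n" by simp
  have "mat n n (\<lambda>(i, j). A $$ (p i, p j)) = mat n n (\<lambda>(i, j). ?C $$ (p i, j))"
    by (intro eq_matI) (auto simp: pn)
  then have "det (mat n n (\<lambda>(i, j). A $$ (p i, p j))) = signof p * det ?C"
    using det_permute_rows[OF C p'] by simp
  also have "det ?C = det (mat n n (\<lambda>(i, j). transpose_mat A $$ (p i, j)))"
    using A by (subst det_transpose[symmetric]) (auto intro!: arg_cong[where f = det] simp: pn)
  also have "\<dots> = signof p * det A"
    using A p' by (simp add: det_permute_rows det_transpose)
  finally show ?thesis by (simp add: mult.assoc[symmetric] flip: of_int_mult)
qed

lemma char_poly_permute_rows_cols:
  fixes A :: "'a :: comm_ring_1 mat"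
  assumes A: "A \<in> carrier_mat n n" and p: "p permutes {..<n}"
  shows "char_poly (mat n n (\<lambda>(i, j). A $$ (p i, p j))) = char_poly A"
proof -
  have pn: "p i < n" if "i < n" for i using permutes_in_image[OF p] that by simp
  have "char_poly_matrix (mat n n (\<lambda>(i, j). A $$ (p i, p j))) =
      mat n n (\<lambda>(i, j). char_poly_matrix A $$ (p i, p j))"
    using A pn permutes_inj_on[OF p]
    by (intro eq_matI) (auto simp: char_poly_matrix_def inj_on_eq_iff)
  then show ?thesis
    unfolding char_poly_def using A p by (simp add: det_permute_rows_cols)
qed

lemma proots_linear_power: "proots ([:a, 1:] ^ k) = replicate_mset k (- a)"
  by (simp add: proots_power)

lemma sombor_spectrum_reorder:
  assumes "distinct vs" "distinct ws" "set vs = set ws"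
  shows "sombor_spectrum V E vs = sombor_spectrum V E ws"
proof -
  obtain p where p: "p permutes {..<length ws}" and vs: "vs = permute_list p ws"
    using assms by (metis set_eq_iff_mset_eq_distinct mset_eq_permutation)
  have pn: "p i < length ws" if "i < length ws" for i using permutes_in_image[OF p] that by simp
  have "sombor_matrix V E vs =
      mat (length ws) (length ws) (\<lambda>(i, j). sombor_matrix V E ws $$ (p i, p j))"
    unfolding vs sombor_matrix_def using p
    by (intro eq_matI) (auto simp: permute_list_nth pn)
  then show ?thesis
    unfolding sombor_spectrum_def
    by (simp add: char_poly_permute_rows_cols[OF _ p] sombor_matrix_def)
qed

definition sombor_weight ::
    "(nat \<Rightarrow> nat \<Rightarrow> bool) \<Rightarrow> (nat \<Rightarrow> nat) \<Rightarrow> nat \<Rightarrow> nat \<Rightarrow> complex" where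
  "sombor_weight A d p q =
     (if A p q then complex_of_real (sqrt (real (d p) ^ 2 + real (d q) ^ 2)) else 0)"

lemma sombor_matrix_eq_class_mat:
  assumes vs: "distinct vs" "set vs \<subseteq> V"
    and adj: "\<And>u v. u \<in> V \<Longrightarrow> v \<in> V \<Longrightarrow> E u v \<longleftrightarrow> u \<noteq> v \<and> A (cl u) (cl v)"
    and deg: "\<And>u. u \<in> V \<Longrightarrow> graph_deg V E u = d (cl u)"
  shows "sombor_matrix V E vs = class_mat (length vs) (\<lambda>i. cl (vs ! i)) (sombor_weight A d)"
proof (rule eq_matI)
  fix i j assume "i < dim_row (class_mat (length vs) (\<lambda>i. cl (vs ! i)) (sombor_weight A d))"
    "j < dim_col (class_mat (length vs) (\<lambda>i. cl (vs ! i)) (sombor_weight A d))"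
  then have i: "i < length vs" and j: "j < length vs" by (auto simp: class_mat_def)
  then have "vs ! i \<in> V" "vs ! j \<in> V" "vs ! i = vs ! j \<longleftrightarrow> i = j"
    using vs by (auto simp: nth_eq_iff_index_eq)
  then show "sombor_matrix V E vs $$ (i, j) =
      class_mat (length vs) (\<lambda>i. cl (vs ! i)) (sombor_weight A d) $$ (i, j)"
    using i j by (simp add: sombor_matrix_def class_mat_def sombor_weight_def adj deg)
qed (auto simp: sombor_matrix_def class_mat_def)

lemma class_size_nth:
  assumes "distinct xs"
  shows "class_size (length xs) (\<lambda>i. f (xs ! i)) p = card {x \<in> set xs. f x = p}"
proof -
  have "{x \<in> set xs. f x = p} = (!) xs ` {l. l < length xs \<and> f (xs ! l) = p}"
    by (auto simp: in_set_conv_nth)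
  moreover have "inj_on ((!) xs) {l. l < length xs \<and> f (xs ! l) = p}"
    using assms by (auto simp: inj_on_def nth_eq_iff_index_eq)
  ultimately show ?thesis by (simp add: class_size_def card_image)
qed

lemma sqrt_two_times_square: "sqrt (2 * x ^ 2) = \<bar>x\<bar> * sqrt 2"
  by (simp add: real_sqrt_mult)

lemma of_real_sqrt_times_self:
  "0 \<le> r \<Longrightarrow> complex_of_real (sqrt r) * complex_of_real (sqrt r) = complex_of_real r"
  by (simp flip: of_real_mult)

text \<open>The representatives of the classes 0, 1, 2 come first, so that \<open>char_poly_class_mat\<close>
  applies.\<close>

definition dihedral_enum :: "nat \<Rightarrow> (nat \<times> bool) list" where
  "dihedral_enum n = [(0, False), (1, False), (0, True)]
     @ map (\<lambda>i. (i, False)) [2..<n] @ map (\<lambda>i. (i, True)) [1..<n]"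

lemma distinct_dihedral_enum: "distinct (dihedral_enum n)"
  by (auto simp: dihedral_enum_def distinct_map inj_on_def)

lemma set_dihedral_enum: "2 \<le> n \<Longrightarrow> set (dihedral_enum n) = carrier (dihedral_group n)"
  by (auto simp: dihedral_enum_def image_iff)

lemma length_dihedral_enum: "2 \<le> n \<Longrightarrow> length (dihedral_enum n) = 2 * n"
  by (simp add: dihedral_enum_def)

definition dihedral_enum_class :: "nat \<Rightarrow> nat \<Rightarrow> nat" where
  "dihedral_enum_class n i = dihedral_class (dihedral_enum n ! i)"

definition dihedral_odd_weight :: "nat \<Rightarrow> nat \<Rightarrow> nat \<Rightarrow> complex" where
  "dihedral_odd_weight n = sombor_weight dihedral_odd_class_adj
     (\<lambda>p. if p = 0 then 2 * n - 1 else if p = 1 then n - 1 else n)"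

lemma class_size_dihedral_enum_class:
  assumes "2 \<le> n"
  shows "class_size (2 * n) (dihedral_enum_class n) p =
    (if p = 0 then 1 else if p = 1 then n - 1 else if p = 2 then n else 0)"
proof -
  have "class_size (2 * n) (dihedral_enum_class n) p =
      class_size (length (dihedral_enum n)) (\<lambda>i. dihedral_class (dihedral_enum n ! i)) p"
    using assms by (simp add: length_dihedral_enum dihedral_enum_class_def[abs_def])
  also have "\<dots> = card {x \<in> set (dihedral_enum n). dihedral_class x = p}"
    by (rule class_size_nth[OF distinct_dihedral_enum])
  also have "\<dots> = card {x \<in> carrier (dihedral_group n). dihedral_class x = p}"
    using assms by (simp only: set_dihedral_enum)
  also have "\<dots> = (if p = 0 then 1 else if p = 1 then n - 1 else if p = 2 then n else 0)"
    using assms by (intro card_dihedral_class) simp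
  finally show ?thesis .
qed

lemma dihedral_odd_weight_diag:
  assumes "1 \<le> n"
  shows "dihedral_odd_weight n 1 1 = (of_nat n - 1) * complex_of_real (sqrt 2)"
    and "dihedral_odd_weight n 2 2 = of_nat n * complex_of_real (sqrt 2)"
proof -
  have "dihedral_odd_weight n 1 1 = complex_of_real (real (n - 1) * sqrt 2)"
    by (simp add: dihedral_odd_weight_def sombor_weight_def dihedral_odd_class_adj_def
        sqrt_two_times_square)
  then show "dihedral_odd_weight n 1 1 = (of_nat n - 1) * complex_of_real (sqrt 2)"
    using assms by simp
  show "dihedral_odd_weight n 2 2 = of_nat n * complex_of_real (sqrt 2)"
    by (simp add: dihedral_odd_weight_def sombor_weight_def dihedral_odd_class_adj_def
        sqrt_two_times_square)
qed

lemma dihedral_odd_weight_off_diag: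
  assumes "1 \<le> n"
  shows "dihedral_odd_weight n 1 2 = 0" and "dihedral_odd_weight n 2 1 = 0"
    and "dihedral_odd_weight n 0 1 * dihedral_odd_weight n 1 0 =
      5 * of_nat n ^ 2 - 6 * of_nat n + 2"
    and "dihedral_odd_weight n 0 2 * dihedral_odd_weight n 2 0 =
      5 * of_nat n ^ 2 - 4 * of_nat n + 1"
proof -
  let ?w = "dihedral_odd_weight n"
  show "?w 1 2 = 0" "?w 2 1 = 0"
    by (simp_all add: dihedral_odd_weight_def sombor_weight_def dihedral_odd_class_adj_def)
  have "?w 1 0 = ?w 0 1" "?w 2 0 = ?w 0 2"
    by (simp_all add: dihedral_odd_weight_def sombor_weight_def dihedral_odd_class_adj_def
        add.commute)
  moreover have "?w 0 1 * ?w 0 1 = complex_of_real (real (2 * n - 1) ^ 2 + real (n - 1) ^ 2)"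
    "?w 0 2 * ?w 0 2 = complex_of_real (real (2 * n - 1) ^ 2 + real n ^ 2)"
    by (simp_all add: dihedral_odd_weight_def sombor_weight_def dihedral_odd_class_adj_def
        of_real_sqrt_times_self)
  moreover have
    "complex_of_real (real (2 * n - 1) ^ 2 + real (n - 1) ^ 2) =
      5 * of_nat n ^ 2 - 6 * of_nat n + 2"
    "complex_of_real (real (2 * n - 1) ^ 2 + real n ^ 2) = 5 * of_nat n ^ 2 - 4 * of_nat n + 1"
    using assms by (simp_all add: power2_eq_square algebra_simps)
  ultimately show "?w 0 1 * ?w 1 0 = 5 * of_nat n ^ 2 - 6 * of_nat n + 2"
    "?w 0 2 * ?w 2 0 = 5 * of_nat n ^ 2 - 4 * of_nat n + 1"
    by simp_all
qed

lemma char_poly_dihedral_odd_quotient: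
  assumes n: "3 \<le> n"
  shows "char_poly (class_quotient_mat (2 * n) 3 (dihedral_enum_class n) (dihedral_odd_weight n)) =
    [:0, 1:] * [:- (of_nat n - 1) * (of_nat n - 2) * complex_of_real (sqrt 2), 1:]
                              * [:- of_nat n * (of_nat n - 1) * complex_of_real (sqrt 2), 1:]
                     - smult ((of_nat n - 1) * (5 * of_nat n ^ 2 - 6 * of_nat n + 2))
                              [:- of_nat n * (of_nat n - 1) * complex_of_real (sqrt 2), 1:]
                     - smult (of_nat n * (5 * of_nat n ^ 2 - 4 * of_nat n + 1))
                              [:- (of_nat n - 1) * (of_nat n - 2) * complex_of_real (sqrt 2), 1:]"
    (is "char_poly ?B = ?Q")
proof (rule poly_eq_poly_eq_iff[THEN iffD1, OF ext])
  fix x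
  let ?w = "dihedral_odd_weight n"
  have n1: "1 \<le> n" using n by simp
  have B: "?B \<in> carrier_mat 3 3" by (simp add: class_quotient_mat_def)
  have "poly (char_poly ?B) x = x * (x - (of_nat n - 2) * ?w 1 1) * (x - (of_nat n - 1) * ?w 2 2)
      - (of_nat n - 1) * (?w 0 1 * ?w 1 0) * (x - (of_nat n - 1) * ?w 2 2)
      - of_nat n * (?w 0 2 * ?w 2 0) * (x - (of_nat n - 2) * ?w 1 1)"
    unfolding poly_char_poly_3[OF B] using n dihedral_odd_weight_off_diag(1,2)[OF n1]
    by (simp add: class_quotient_mat_def class_size_dihedral_enum_class)
  also have "\<dots> = poly ?Q x"
    unfolding dihedral_odd_weight_diag[OF n1] dihedral_odd_weight_off_diag(3,4)[OF n1]
    by (simp add: algebra_simps)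
  finally show "poly (char_poly ?B) x = poly ?Q x" .
qed

lemma char_poly_sombor_matrix_dihedral_enum_odd:
  assumes n: "odd n" "3 \<le> n"
  shows "char_poly (sombor_matrix (carrier (dihedral_group n)) (osc_adj (dihedral_group n))
      (dihedral_enum n)) =
    char_poly (class_quotient_mat (2 * n) 3 (dihedral_enum_class n) (dihedral_odd_weight n))
    * ([:(of_nat n - 1) * complex_of_real (sqrt 2), 1:] ^ (n - 2)
       * [:of_nat n * complex_of_real (sqrt 2), 1:] ^ (n - 1))"
proof -
  let ?c = "dihedral_enum_class n" and ?w = "dihedral_odd_weight n"
  have ws: "distinct (dihedral_enum n)" "set (dihedral_enum n) = carrier (dihedral_group n)"
    "length (dihedral_enum n) = 2 * n"
    using n distinct_dihedral_enum set_dihedral_enum length_dihedral_enum by auto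
  have "sombor_matrix (carrier (dihedral_group n)) (osc_adj (dihedral_group n)) (dihedral_enum n) =
      class_mat (2 * n) ?c ?w"
    unfolding dihedral_odd_weight_def dihedral_enum_class_def[abs_def] ws(3)[symmetric]
    using ws osc_adj_dihedral_odd[OF n(1)] graph_deg_dihedral_odd[OF n(1)]
    by (intro sombor_matrix_eq_class_mat) auto
  moreover have "char_poly (class_mat (2 * n) ?c ?w) =
      char_poly (class_quotient_mat (2 * n) 3 ?c ?w)
      * (\<Prod>i<3. [:?w i i, 1:] ^ (class_size (2 * n) ?c i - 1))"
  proof (rule char_poly_class_mat)
    show "?c i = i" if "i < 3" for i
      using that n
      by (auto simp: dihedral_enum_class_def dihedral_enum_def dihedral_class_def nth_append
          less_Suc_eq numeral_3_eq_3)
    show "?c l < 3" for l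
      by (simp add: dihedral_enum_class_def dihedral_class_def)
  qed (use n in auto)
  moreover have "{..<3::nat} = {0, 1, 2}" by auto
  moreover have "class_size (2 * n) ?c 0 = 1" "class_size (2 * n) ?c 1 = n - 1"
    "class_size (2 * n) ?c 2 = n"
    using n by (simp_all add: class_size_dihedral_enum_class)
  ultimately show ?thesis
    using dihedral_odd_weight_diag[of n] n by (simp add: numeral_2_eq_2)
qed

lemma sombor_spectrum_dihedral_odd:
  fixes n :: nat and vs :: "(nat \<times> bool) list"
  assumes n: "odd n" "3 \<le> n" and vs: "distinct vs" "set vs = carrier (dihedral_group n)"
  shows "sombor_spectrum (carrier (dihedral_group n)) (osc_adj (dihedral_group n)) vs =
             replicate_mset (n - 2) (- (of_nat n - 1) * complex_of_real (sqrt 2))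
           + replicate_mset (n - 1) (- of_nat n * complex_of_real (sqrt 2))
           + proots ([:0, 1:] * [:- (of_nat n - 1) * (of_nat n - 2) * complex_of_real (sqrt 2), 1:]
                              * [:- of_nat n * (of_nat n - 1) * complex_of_real (sqrt 2), 1:]
                     - smult ((of_nat n - 1) * (5 * of_nat n ^ 2 - 6 * of_nat n + 2))
                              [:- of_nat n * (of_nat n - 1) * complex_of_real (sqrt 2), 1:]
                     - smult (of_nat n * (5 * of_nat n ^ 2 - 4 * of_nat n + 1))
                              [:- (of_nat n - 1) * (of_nat n - 2) * complex_of_real (sqrt 2), 1:])"
    (is "_ = ?R1 + ?R2 + proots ?Q")
proof -
  let ?V = "carrier (dihedral_group n)" and ?E = "osc_adj (dihedral_group n)"
  let ?B = "class_quotient_mat (2 * n) 3 (dihedral_enum_class n) (dihedral_odd_weight n)"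
  have "char_poly ?B \<noteq> 0"
    using degree_monic_char_poly[of ?B 3] by (auto simp: class_quotient_mat_def)
  have "sombor_spectrum ?V ?E vs = sombor_spectrum ?V ?E (dihedral_enum n)"
    using vs n distinct_dihedral_enum set_dihedral_enum by (intro sombor_spectrum_reorder) auto
  also have "\<dots> = proots (char_poly ?B) + (?R1 + ?R2)"
    unfolding sombor_spectrum_def char_poly_sombor_matrix_dihedral_enum_odd[OF n]
    using \<open>char_poly ?B \<noteq> 0\<close> by (simp add: proots_mult proots_linear_power left_diff_distrib)
  finally show ?thesis
    unfolding char_poly_dihedral_odd_quotient[OF n(2)] by (simp add: add_ac)
qed

lemma sombor_spectrum_dihedral_even:
  fixes n :: nat and vs :: "(nat \<times> bool) list"
  assumes n: "even n" "0 < n" and vs: "distinct vs" "set vs = carrier (dihedral_group n)"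
  shows "sombor_spectrum (carrier (dihedral_group n)) (osc_adj (dihedral_group n)) vs =
             replicate_mset (2 * n - 1) (- (2 * of_nat n - 1) * complex_of_real (sqrt 2))
           + replicate_mset 1 ((2 * of_nat n - 1) ^ 2 * complex_of_real (sqrt 2))"
proof -
  let ?V = "carrier (dihedral_group n)" and ?E = "osc_adj (dihedral_group n)"
  let ?s = "complex_of_real (sqrt 2)"
  define w where "w = sombor_weight (\<lambda>_ _. True) (\<lambda>_. 2 * n - 1)"
  define B where "B = class_quotient_mat (2 * n) 1 (\<lambda>_. 0) w"
  have len: "length vs = 2 * n"
    using vs distinct_card card_carrier_dihedral_group by metis
  have "sombor_matrix ?V ?E vs = class_mat (2 * n) (\<lambda>_. 0) w"
    using sombor_matrix_eq_class_mat[of vs ?V ?E "\<lambda>_ _. True" "\<lambda>_. 0" "\<lambda>_. 2 * n - 1"]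
      vs osc_adj_dihedral_even[OF n(1)] graph_deg_dihedral_even[OF n(1)]
    by (simp add: w_def len)
  moreover have "char_poly (class_mat (2 * n) (\<lambda>_. 0) w) =
      char_poly B * (\<Prod>i<1. [:w i i, 1:] ^ (class_size (2 * n) (\<lambda>_. 0) i - 1))"
    unfolding B_def using n by (intro char_poly_class_mat) auto
  moreover have "class_size (2 * n) (\<lambda>_. 0) 0 = 2 * n"
    by (simp add: class_size_def)
  moreover have "char_poly B = [:- (of_nat (2 * n) - 1) * w 0 0, 1:]"
    by (subst char_poly_upper_triangular[of _ 1]) (auto simp: B_def class_quotient_mat_def
        upper_triangular_def diag_mat_def class_size_def left_diff_distrib)
  moreover have "w 0 0 = (2 * of_nat n - 1) * ?s"
  proof -
    have "w 0 0 = complex_of_real (real (2 * n - 1) * sqrt 2)"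
      by (simp add: w_def sombor_weight_def sqrt_two_times_square)
    then show ?thesis using n by simp
  qed
  ultimately have char_poly_vs: "char_poly (sombor_matrix ?V ?E vs) =
      [:- ((2 * of_nat n - 1) ^ 2 * ?s), 1:] * [:(2 * of_nat n - 1) * ?s, 1:] ^ (2 * n - 1)"
    by (simp add: power2_eq_square algebra_simps)
  show ?thesis
    unfolding sombor_spectrum_def char_poly_vs
    by (subst proots_mult) (simp_all add: proots_linear_power left_diff_distrib add.commute)
qed

theorem corollary4p4:
  fixes n :: nat and vs :: "(nat \<times> bool) list"
  assumes "n \<ge> 3"
    and "distinct vs" and "set vs = carrier (dihedral_group n)"
  shows "(odd n \<longrightarrow>
           sombor_spectrum (carrier (dihedral_group n)) (osc_adj (dihedral_group n)) vs =
             replicate_mset (n - 2) (- (of_nat n - 1) * complex_of_real (sqrt 2))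
           + replicate_mset (n - 1) (- of_nat n * complex_of_real (sqrt 2))
           + proots ([:0, 1:] * [:- (of_nat n - 1) * (of_nat n - 2) * complex_of_real (sqrt 2), 1:]
                              * [:- of_nat n * (of_nat n - 1) * complex_of_real (sqrt 2), 1:]
                     - smult ((of_nat n - 1) * (5 * of_nat n ^ 2 - 6 * of_nat n + 2))
                              [:- of_nat n * (of_nat n - 1) * complex_of_real (sqrt 2), 1:]
                     - smult (of_nat n * (5 * of_nat n ^ 2 - 4 * of_nat n + 1))
                              [:- (of_nat n - 1) * (of_nat n - 2) * complex_of_real (sqrt 2), 1:]))
        \<and> (even n \<longrightarrow>
           sombor_spectrum (carrier (dihedral_group n)) (osc_adj (dihedral_group n)) vs =
             replicate_mset (2 * n - 1) (- (2 * of_nat n - 1) * complex_of_real (sqrt 2))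
           + replicate_mset 1 ((2 * of_nat n - 1) ^ 2 * complex_of_real (sqrt 2)))"
  using sombor_spectrum_dihedral_odd[OF _ assms] sombor_spectrum_dihedral_even[OF _ _ assms(2,3)]
    assms(1)
  by auto

end
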